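(* Let $K\in\{3,4\}$. For generic $U,H,W\in\mathbb{C}^{K\times K}$ (that is, for all triples outside the zero set of some nonzero polynomial in their entries), there exist diagonal matrices $D_1,D_2,D_3\in\mathbb{C}^{K\times K}$ and scalars $\lambda_1,\dots,\lambda_K\in\mathbb{C}$ such that, with $B:=HD_1+HD_2U+WD_3H$, for every $i\in\{1,\dots,K\}$ we have $B_{ij}=\lambda_i H_{ij}$ for all $j\neq i$, and $B_{ii}\neq \lambda_i H_{ii}$.
   Context: Setting: a $K$-user interference channel with full-duplex (in-band) interaction: $H$ is the channel matrix from sources to destinations, $U$ the channel matrix among sources, $W$ the channel matrix among destinations. In a two-phase scheme, in phase 1 sources send $x$, sources receive $Ux$ and destinations receive $Hx$; in phase 2 sources send $D_1x+D_2(Ux)$ and destinations send $D_3(Hx)$, so destinations receive $Bx$ (noise ignored). The diagonal coding matrices reflect that each node codes only over its own signals. The conditions mean interference at each destination is aligned between the two phases while the desired signal survives cancellation. *)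

theory Defs
  imports "HOL-Analysis.Analysis"
begin

type_synonym ('n) cmat = "complex ^ 'n ^ 'n"

inductive poly_in_entries :: "(('n::finite) cmat \<times> 'n cmat \<times> 'n cmat \<Rightarrow> complex) \<Rightarrow> bool" where
  const: "poly_in_entries (\<lambda>_. c)"
| varU: "poly_in_entries (\<lambda>(U, H, W). U $ i $ j)"
| varH: "poly_in_entries (\<lambda>(U, H, W). H $ i $ j)"
| varW: "poly_in_entries (\<lambda>(U, H, W). W $ i $ j)"
| add: "poly_in_entries p \<Longrightarrow> poly_in_entries q \<Longrightarrow> poly_in_entries (\<lambda>t. p t + q t)"
| mult: "poly_in_entries p \<Longrightarrow> poly_in_entries q \<Longrightarrow> poly_in_entries (\<lambda>t. p t * q t)"

text \<open>A property holds generically if it holds outside the zero set of some nonzero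
  polynomial in the entries (over the infinite field C, nonzero as a polynomial is
  the same as nonzero as a function).\<close>
definition generic :: "(('n::finite) cmat \<Rightarrow> 'n cmat \<Rightarrow> 'n cmat \<Rightarrow> bool) \<Rightarrow> bool" where
  "generic P \<longleftrightarrow> (\<exists>p. poly_in_entries p \<and> (\<exists>t. p t \<noteq> 0) \<and>
      (\<forall>U H W. p (U, H, W) \<noteq> 0 \<longrightarrow> P U H W))"

definition diagonal_mat :: "('n::finite) cmat \<Rightarrow> bool" where
  "diagonal_mat D \<longleftrightarrow> (\<forall>i j. i \<noteq> j \<longrightarrow> D $ i $ j = 0)"

end

theory Submission
  imports Defs
begin

(* Give each diagonal index k the unknowns x(k, c), and let each column c supply the diagonal of
   D1, D2, D3 or the multipliers lambda.  The alignment conditions B_ij = lambda_i H_ij (i \<noteq> j)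
   are then K(K - 1) linear equations in x; K normalisation equations make the system A x = e
   square.  By Cramer's rule det A * x is polynomial in the entries of (U, H, W), so det A times
   the product of the diagonal residuals B_ii - lambda_i H_ii at this point is a polynomial whose
   nonvanishing yields the conclusion.  It is not the zero polynomial: at an explicit integer point
   A has an explicit inverse and the solution has nonzero diagonal residuals.  Relabelling indices
   transfers the result to every index type with 3 or 4 elements. *)

lemma poly_in_entries_U: "poly_in_entries (\<lambda>t. fst t $ i $ j)"
  using poly_in_entries.varU[of i j] by (simp add: split_def)

lemma poly_in_entries_H: "poly_in_entries (\<lambda>t. fst (snd t) $ i $ j)"
  using poly_in_entries.varH[of i j] by (simp add: split_def)

lemma poly_in_entries_W: "poly_in_entries (\<lambda>t. snd (snd t) $ i $ j)"
  using poly_in_entries.varW[of i j] by (simp add: split_def)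

lemma poly_in_entries_sum:
  "finite S \<Longrightarrow> (\<And>s. s \<in> S \<Longrightarrow> poly_in_entries (f s)) \<Longrightarrow> poly_in_entries (\<lambda>t. \<Sum>s\<in>S. f s t)"
  by (induction S rule: finite_induct) (simp_all add: poly_in_entries.intros)

lemma poly_in_entries_prod:
  "finite S \<Longrightarrow> (\<And>s. s \<in> S \<Longrightarrow> poly_in_entries (f s)) \<Longrightarrow> poly_in_entries (\<lambda>t. \<Prod>s\<in>S. f s t)"
  by (induction S rule: finite_induct) (simp_all add: poly_in_entries.intros)

lemma poly_in_entries_if:
  "poly_in_entries p \<Longrightarrow> poly_in_entries q \<Longrightarrow> poly_in_entries (\<lambda>t. if b then p t else q t)"
  by (cases b) simp_all

lemma poly_in_entries_det:
  fixes M :: "('n::finite) cmat \<times> 'n cmat \<times> 'n cmat \<Rightarrow> complex^'m^'m"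
  assumes "\<And>i j. poly_in_entries (\<lambda>t. M t $ i $ j)"
  shows "poly_in_entries (\<lambda>t. det (M t))"
  unfolding det_def
  by (intro poly_in_entries_sum poly_in_entries_prod poly_in_entries.intros assms
      finite_permutations finite)

lemma sum_UNIV_pairs: "(\<Sum>kc\<in>UNIV. f kc) = (\<Sum>k\<in>UNIV. \<Sum>c\<in>UNIV. f (k, c))"
  by (simp add: sum.cartesian_product)

definition alignable :: "'n::finite cmat \<Rightarrow> 'n cmat \<Rightarrow> 'n cmat \<Rightarrow> bool" where
  "alignable U H W \<longleftrightarrow> (\<exists>D1 D2 D3 (lam :: 'n \<Rightarrow> complex).
     diagonal_mat D1 \<and> diagonal_mat D2 \<and> diagonal_mat D3 \<and>
     (let B = H ** D1 + H ** D2 ** U + W ** D3 ** H in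
       \<forall>i. (\<forall>j. j \<noteq> i \<longrightarrow> B $ i $ j = lam i * H $ i $ j) \<and>
           B $ i $ i \<noteq> lam i * H $ i $ i))"

datatype role = Diag1 | Diag2 | Diag3 | Multiplier

definition role_sum :: "('n::finite \<Rightarrow> role) \<Rightarrow> role \<Rightarrow> complex^('n \<times> 'n) \<Rightarrow> 'n \<Rightarrow> complex" where
  "role_sum \<rho> r x k = (\<Sum>c\<in>UNIV. if \<rho> c = r then x $ (k, c) else 0)"

definition diag_of :: "('n::finite \<Rightarrow> role) \<Rightarrow> role \<Rightarrow> complex^('n \<times> 'n) \<Rightarrow> 'n cmat" where
  "diag_of \<rho> r x = (\<chi> a b. if a = b then role_sum \<rho> r x a else 0)"

definition residual ::
    "('n::finite \<Rightarrow> role) \<Rightarrow> 'n cmat \<Rightarrow> 'n cmat \<Rightarrow> 'n cmat \<Rightarrow> complex^('n \<times> 'n) \<Rightarrow> 'n \<Rightarrow> 'n \<Rightarrow> complex"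
  where
  "residual \<rho> U H W x i j =
     (H ** diag_of \<rho> Diag1 x + H ** diag_of \<rho> Diag2 x ** U + W ** diag_of \<rho> Diag3 x ** H) $ i $ j
     - role_sum \<rho> Multiplier x i * H $ i $ j"

fun residual_coeff ::
    "('n::finite \<Rightarrow> role) \<Rightarrow> 'n cmat \<Rightarrow> 'n cmat \<Rightarrow> 'n cmat \<Rightarrow> 'n \<Rightarrow> 'n \<Rightarrow> 'n \<times> 'n \<Rightarrow> complex"
  where
  "residual_coeff \<rho> U H W i j (k, c) = (case \<rho> c of
     Diag1 \<Rightarrow> if k = j then H $ i $ j else 0
   | Diag2 \<Rightarrow> H $ i $ k * U $ k $ j
   | Diag3 \<Rightarrow> W $ i $ k * H $ k $ j
   | Multiplier \<Rightarrow> if k = i then - H $ i $ j else 0)"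

lemma alignable_if_residuals:
  assumes "\<And>i j. j \<noteq> i \<Longrightarrow> residual \<rho> U H W x i j = 0"
    and "\<And>i. residual \<rho> U H W x i i \<noteq> 0"
  shows "alignable U H W"
proof -
  let ?B = "H ** diag_of \<rho> Diag1 x + H ** diag_of \<rho> Diag2 x ** U + W ** diag_of \<rho> Diag3 x ** H"
  let ?lam = "role_sum \<rho> Multiplier x"
  have "diagonal_mat (diag_of \<rho> r x)" for r
    by (simp add: diagonal_mat_def diag_of_def)
  moreover have "?B $ i $ j = ?lam i * H $ i $ j" if "j \<noteq> i" for i j
    using assms(1)[OF that] by (simp add: residual_def)
  moreover have "?B $ i $ i \<noteq> ?lam i * H $ i $ i" for i
    using assms(2)[of i] by (simp add: residual_def)
  ultimately show ?thesis
    unfolding alignable_def Let_def by blast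
qed

lemma matrix_mult_diag_of_entry:
  "(H ** diag_of \<rho> r x) $ i $ j = H $ i $ j * role_sum \<rho> r x j"
  by (simp add: matrix_matrix_mult_def diag_of_def if_distrib[of "\<lambda>z. _ * z"] cong: if_cong)

lemma matrix_mult_diag_of_mult_entry:
  "(H ** diag_of \<rho> r x ** U) $ i $ j = (\<Sum>k\<in>UNIV. H $ i $ k * role_sum \<rho> r x k * U $ k $ j)"
  by (simp add: matrix_matrix_mult_def[of "H ** diag_of \<rho> r x" U] matrix_mult_diag_of_entry)

lemma sum_role_coeff:
  "(\<Sum>k\<in>UNIV. \<Sum>c\<in>UNIV. if \<rho> c = r then a k * x $ (k, c) else 0) = (\<Sum>k\<in>UNIV. a k * role_sum \<rho> r x k)"
  unfolding role_sum_def sum_distrib_left by (simp add: mult_delta_right)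

lemma residual_eq_sum_coeff:
  "residual \<rho> U H W x i j = (\<Sum>kc\<in>UNIV. residual_coeff \<rho> U H W i j kc * x $ kc)"
proof -
  have coeff_by_role: "residual_coeff \<rho> U H W i j (k, c) * x $ (k, c) =
      (if \<rho> c = Diag1 then (if k = j then H $ i $ j else 0) * x $ (k, c) else 0)
    + (if \<rho> c = Diag2 then (H $ i $ k * U $ k $ j) * x $ (k, c) else 0)
    + (if \<rho> c = Diag3 then (W $ i $ k * H $ k $ j) * x $ (k, c) else 0)
    - (if \<rho> c = Multiplier then (if k = i then H $ i $ j else 0) * x $ (k, c) else 0)" for k c
    by (cases "\<rho> c") auto
  show ?thesis
    unfolding sum_UNIV_pairs coeff_by_role sum.distrib sum_subtractf sum_role_coeff
    by (simp add: residual_def matrix_mult_diag_of_entry matrix_mult_diag_of_mult_entry mult_ac mult_delta_right)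
qed

lemma residual_scale: "residual \<rho> U H W (c *s x) i j = c * residual \<rho> U H W x i j"
  by (simp add: residual_eq_sum_coeff sum_distrib_left mult_ac)

(* Rows (i, j) with i \<noteq> j express the vanishing of the off-diagonal residuals; the rows (i, i)
   are free normalisation rows R i which make the system square. *)
definition system_mat ::
    "('n::finite \<Rightarrow> role) \<Rightarrow> ('n \<Rightarrow> complex^('n \<times> 'n)) \<Rightarrow> 'n cmat \<Rightarrow> 'n cmat \<Rightarrow> 'n cmat
      \<Rightarrow> complex^('n \<times> 'n)^('n \<times> 'n)"
  where
  "system_mat \<rho> R U H W =
     (\<chi> r. if fst r = snd r then R (fst r) else (\<chi> kc. residual_coeff \<rho> U H W (fst r) (snd r) kc))"

lemma system_mat_mult_offdiag:
  "i \<noteq> j \<Longrightarrow> (system_mat \<rho> R U H W *v x) $ (i, j) = residual \<rho> U H W x i j"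
  by (simp add: system_mat_def matrix_vector_mult_def residual_eq_sum_coeff)

definition cramer_numerators :: "'a::field^'m^'m \<Rightarrow> 'a^'m \<Rightarrow> 'a^'m" where
  "cramer_numerators A b = (\<chi> k. det (\<chi> i j. if j = k then b $ i else A $ i $ j))"

lemma cramer_numerators_solve:
  "det A \<noteq> 0 \<Longrightarrow> A *v (inverse (det A) *s cramer_numerators A b) = b"
  using cramer[of A _ b] by (simp add: cramer_numerators_def vec_eq_iff field_simps)

lemma cramer_numerators_mult_vec: "cramer_numerators A (A *v x) = det A *s x"
  by (simp add: cramer_numerators_def vec_eq_iff cramer_lemma mult.commute)

(* The residuals are linear in x, so evaluating them at the Cramer numerators, which are
   polynomial in the entries, clears the denominator det A. *)
definition certificate ::
    "('n::finite \<Rightarrow> role) \<Rightarrow> ('n \<Rightarrow> complex^('n \<times> 'n)) \<Rightarrow> 'n \<Rightarrow> 'n cmat \<Rightarrow> 'n cmat \<Rightarrow> 'n cmat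
      \<Rightarrow> complex"
  where
  "certificate \<rho> R r0 U H W =
     (let A = system_mat \<rho> R U H W; x = cramer_numerators A (axis (r0, r0) 1)
      in det A * (\<Prod>i\<in>UNIV. residual \<rho> U H W x i i))"

lemma alignable_if_certificate:
  assumes "certificate \<rho> R r0 U H W \<noteq> 0"
  shows "alignable U H W"
proof -
  define A where "A = system_mat \<rho> R U H W"
  define x where "x = cramer_numerators A (axis (r0, r0) 1)"
  have det: "det A \<noteq> 0" and diag: "residual \<rho> U H W x i i \<noteq> 0" for i
    using assms by (simp_all add: certificate_def A_def x_def Let_def)
  let ?y = "inverse (det A) *s x"
  have solve: "A *v ?y = axis (r0, r0) 1"
    unfolding x_def using det by (rule cramer_numerators_solve)
  show ?thesis
  proof (rule alignable_if_residuals)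
    fix i j :: 'a assume "j \<noteq> i"
    then have "residual \<rho> U H W ?y i j = (A *v ?y) $ (i, j)"
      by (simp add: A_def system_mat_mult_offdiag)
    also have "\<dots> = 0"
      using solve \<open>j \<noteq> i\<close> by (auto simp: axis_def)
    finally show "residual \<rho> U H W ?y i j = 0" .
  next
    show "residual \<rho> U H W ?y i i \<noteq> 0" for i
      using det diag by (simp add: residual_scale)
  qed
qed

lemma certificate_nonzero_if_solution:
  assumes "B ** system_mat \<rho> R U H W = mat 1"
    and "system_mat \<rho> R U H W *v y = axis (r0, r0) 1"
    and "\<And>i. residual \<rho> U H W y i i \<noteq> 0"
  shows "certificate \<rho> R r0 U H W \<noteq> 0"
proof -
  have "det B * det (system_mat \<rho> R U H W) = 1"
    by (metis assms(1) det_I det_mul)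
  then have "det (system_mat \<rho> R U H W) \<noteq> 0" by auto
  with assms(3) show ?thesis
    by (simp add: certificate_def assms(2)[symmetric] cramer_numerators_mult_vec residual_scale Let_def)
qed

lemma poly_in_entries_residual_coeff:
  "poly_in_entries (\<lambda>t. residual_coeff \<rho> (fst t) (fst (snd t)) (snd (snd t)) i j kc)"
proof -
  obtain k c where "kc = (k, c)" by fastforce
  moreover have "poly_in_entries (\<lambda>t. - fst (snd t) $ i $ j)"
    using poly_in_entries.mult[OF poly_in_entries.const poly_in_entries_H, of "-1"] by simp
  ultimately show ?thesis
    by (cases "\<rho> c"; cases "k = j"; cases "k = i")
      (auto intro: poly_in_entries.intros poly_in_entries_U poly_in_entries_H poly_in_entries_W)
qed

lemma poly_in_entries_system_mat:
  "poly_in_entries (\<lambda>t. system_mat \<rho> R (fst t) (fst (snd t)) (snd (snd t)) $ r $ s)"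
  by (cases "fst r = snd r")
    (simp_all add: system_mat_def poly_in_entries.const poly_in_entries_residual_coeff)

lemma poly_in_entries_certificate:
  "poly_in_entries (\<lambda>t. certificate \<rho> R r0 (fst t) (fst (snd t)) (snd (snd t)))"
  unfolding certificate_def Let_def residual_eq_sum_coeff cramer_numerators_def vec_lambda_beta
  by (intro poly_in_entries.mult poly_in_entries_det poly_in_entries_prod poly_in_entries_sum
      poly_in_entries_residual_coeff poly_in_entries_system_mat finite)
    (simp only: vec_lambda_beta; intro poly_in_entries_if poly_in_entries.const poly_in_entries_system_mat)

lemma generic_alignable_if_certificate:
  fixes \<rho> :: "'n::finite \<Rightarrow> role"
  assumes "certificate \<rho> R r0 U H W \<noteq> 0"
  shows "generic (alignable :: 'n cmat \<Rightarrow> 'n cmat \<Rightarrow> 'n cmat \<Rightarrow> bool)"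
  unfolding generic_def
proof (intro exI[of _ "\<lambda>t. certificate \<rho> R r0 (fst t) (fst (snd t)) (snd (snd t))"] conjI allI impI)
  show "poly_in_entries (\<lambda>t. certificate \<rho> R r0 (fst t) (fst (snd t)) (snd (snd t)))"
    by (rule poly_in_entries_certificate)
  show "\<exists>t. certificate \<rho> R r0 (fst t) (fst (snd t)) (snd (snd t)) \<noteq> 0"
    using assms by (intro exI[of _ "(U, H, W)"]) simp
qed (simp add: alignable_if_certificate)

definition relabel :: "('m::finite \<Rightarrow> 'n::finite) \<Rightarrow> 'n cmat \<Rightarrow> 'm cmat" where
  "relabel g M = (\<chi> a b. M $ g a $ g b)"

lemma relabel_add: "relabel g (X + Y) = relabel g X + relabel g Y"
  by (simp add: relabel_def vec_eq_iff)

lemma relabel_mult: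
  assumes "bij g"
  shows "relabel g (X ** Y) = relabel g X ** relabel g Y"
proof -
  have "(\<Sum>k\<in>UNIV. X $ g a $ k * Y $ k $ g b) = (\<Sum>c\<in>UNIV. X $ g a $ g c * Y $ g c $ g b)" for a b
    using sum.reindex_bij_betw[of g UNIV UNIV "\<lambda>k. X $ g a $ k * Y $ k $ g b"] assms by simp
  then show ?thesis
    by (simp add: relabel_def matrix_matrix_mult_def vec_eq_iff)
qed

lemma relabel_relabel_inv: "bij g \<Longrightarrow> relabel g (relabel (inv g) M) = M"
  by (simp add: relabel_def vec_eq_iff bij_is_inj)

lemma relabel_inv_entry: "bij g \<Longrightarrow> relabel g M $ inv g i $ inv g j = M $ i $ j"
  by (simp add: relabel_def bij_is_surj surj_f_inv_f)

lemma diagonal_mat_relabel: "inj g \<Longrightarrow> diagonal_mat D \<Longrightarrow> diagonal_mat (relabel g D)"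
  by (simp add: diagonal_mat_def relabel_def inj_eq)

lemma poly_in_entries_relabel:
  assumes "poly_in_entries p"
  shows "poly_in_entries (\<lambda>t. p (relabel g (fst t), relabel g (fst (snd t)), relabel g (snd (snd t))))"
  using assms
proof induction
  case (varU i j) then show ?case using poly_in_entries_U[of "g i" "g j"] by (simp add: relabel_def)
next
  case (varH i j) then show ?case using poly_in_entries_H[of "g i" "g j"] by (simp add: relabel_def)
next
  case (varW i j) then show ?case using poly_in_entries_W[of "g i" "g j"] by (simp add: relabel_def)
qed (simp_all add: poly_in_entries.intros)

lemma generic_relabel:
  assumes "bij (g :: 'm::finite \<Rightarrow> 'n::finite)" and "generic P"
    and "\<And>U H W. P (relabel g U) (relabel g H) (relabel g W) \<Longrightarrow> Q U H W"
  shows "generic Q"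
proof -
  obtain p U0 H0 W0 where p: "poly_in_entries p" and nonzero: "p (U0, H0, W0) \<noteq> 0"
    and P: "\<And>U H W. p (U, H, W) \<noteq> 0 \<Longrightarrow> P U H W"
    using assms(2) unfolding generic_def by (metis prod_cases3)
  let ?q = "\<lambda>t. p (relabel g (fst t), relabel g (fst (snd t)), relabel g (snd (snd t)))"
  have "?q (relabel (inv g) U0, relabel (inv g) H0, relabel (inv g) W0) \<noteq> 0"
    using nonzero assms(1) by (simp add: relabel_relabel_inv)
  moreover have "Q U H W" if "?q (U, H, W) \<noteq> 0" for U H W
    using P assms(3) that by simp
  ultimately show ?thesis
    unfolding generic_def using poly_in_entries_relabel[OF p] by blast
qed

lemma alignable_relabel:
  assumes g: "bij (g :: 'm::finite \<Rightarrow> 'n::finite)"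
    and "alignable (relabel g U) (relabel g H) (relabel g W)"
  shows "alignable U H W"
proof -
  obtain D1 D2 D3 lam B' where D: "diagonal_mat D1" "diagonal_mat D2" "diagonal_mat D3"
    and B': "B' = relabel g H ** D1 + relabel g H ** D2 ** relabel g U + relabel g W ** D3 ** relabel g H"
    and aligned: "\<And>i. (\<forall>j. j \<noteq> i \<longrightarrow> B' $ i $ j = lam i * relabel g H $ i $ j) \<and>
                      B' $ i $ i \<noteq> lam i * relabel g H $ i $ i"
    using assms(2) unfolding alignable_def Let_def by blast
  let ?h = "inv g"
  have h: "bij ?h" using g by (rule bij_imp_bij_inv)
  let ?B = "H ** relabel ?h D1 + H ** relabel ?h D2 ** U + W ** relabel ?h D3 ** H"
  have "relabel g ?B = relabel g H ** D1 + relabel g H ** D2 ** relabel g U + relabel g W ** D3 ** relabel g H"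
    using g by (simp add: relabel_add relabel_mult relabel_relabel_inv)
  then have B_entry: "?B $ i $ j = B' $ ?h i $ ?h j" for i j
    using relabel_inv_entry[OF g, of ?B] B' by metis
  have H_entry: "H $ i $ j = relabel g H $ ?h i $ ?h j" for i j
    using relabel_inv_entry[OF g] by metis
  have diag: "diagonal_mat (relabel ?h D)" if "diagonal_mat D" for D
    using that h by (simp add: diagonal_mat_relabel bij_is_inj)
  have on_diag: "?B $ i $ i \<noteq> lam (?h i) * H $ i $ i" for i
    using aligned[of "?h i"] B_entry[of i i] H_entry[of i i] by simp
  have off_diag: "?B $ i $ j = lam (?h i) * H $ i $ j" if "j \<noteq> i" for i j
  proof -
    have "?h j \<noteq> ?h i" using that h by (metis bij_is_inj inj_eq)
    then show ?thesis using aligned[of "?h i"] B_entry[of i j] H_entry[of i j] by simp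
  qed
  show ?thesis
    unfolding alignable_def Let_def
    by (rule exI[of _ "relabel ?h D1"], rule exI[of _ "relabel ?h D2"],
        rule exI[of _ "relabel ?h D3"], rule exI[of _ "\<lambda>i. lam (?h i)"])
      (use D diag on_diag off_diag in blast)
qed

definition int_mat :: "('a \<Rightarrow> nat) \<Rightarrow> int list list \<Rightarrow> complex^'a^'a" where
  "int_mat ix M = (\<chi> i j. of_int (M ! ix i ! ix j))"

definition int_vec :: "('a \<Rightarrow> nat) \<Rightarrow> int list \<Rightarrow> complex^'a" where
  "int_vec ix v = (\<chi> i. of_int (v ! ix i))"

datatype idx3 = I0 | I1 | I2

lemma UNIV_idx3: "(UNIV :: idx3 set) = {I0, I1, I2}"
  using idx3.exhaust by auto

instance idx3 :: finite
  by standard (simp add: UNIV_idx3)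

lemma sum_idx3: "sum f (UNIV :: idx3 set) = f I0 + f I1 + f I2"
  by (simp add: UNIV_idx3 ac_simps)

lemma all_idx3: "(\<forall>x :: idx3. P x) \<longleftrightarrow> P I0 \<and> P I1 \<and> P I2"
  by (metis idx3.exhaust)

fun ix3 :: "idx3 \<Rightarrow> nat" where "ix3 I0 = 0" | "ix3 I1 = 1" | "ix3 I2 = 2"

fun pair_ix3 :: "idx3 \<times> idx3 \<Rightarrow> nat" where "pair_ix3 (a, b) = 3 * ix3 a + ix3 b"

fun roles3 :: "idx3 \<Rightarrow> role" where
  "roles3 I0 = Diag1" | "roles3 I1 = Diag2" | "roles3 I2 = Multiplier"

fun normalised3 :: "idx3 \<Rightarrow> idx3 \<times> idx3" where
  "normalised3 I0 = (I1, I1)" | "normalised3 I1 = (I0, I0)" | "normalised3 I2 = (I1, I0)"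

definition "U3 = int_mat ix3 [[0, 1, 1], [0, 0, 1], [1, 0, 0]]"
definition "H3 = int_mat ix3 [[1, 1, 0], [1, 1, 1], [0, 1, 1]]"
definition "W3 = int_mat ix3 [[0, 1, 0], [0, 1, 0], [1, 1, 0]]"
definition "R3 i = axis (normalised3 i) 1"

definition "inverse3 = int_mat pair_ix3
  [[0, 0, 0, 0, 1, 0, 0, 0, 0], [-1, 0, 1, 0, 0, 0, 0, 0, 0], [-1, -1, 1, 0, 0, 0, 0, 0, 1],
   [0, 0, 0, 0, 0, 0, 0, 0, 1], [1, 0, 0, 0, 0, 0, 0, 0, 0], [0, 0, 0, -1, 1, 0, 1, 0, 0],
   [0, 0, -1, -1, 1, 1, 1, 0, 0], [0, 0, 0, 0, 0, 0, 1, 0, 0], [0, 0, 0, 0, 0, 0, 0, -1, 1]]"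

definition "solution3 = int_vec pair_ix3 [1, 0, 0, 0, 0, 1, 1, 0, 0]"

lemma generic_alignable_idx3: "generic (alignable :: idx3 cmat \<Rightarrow> idx3 cmat \<Rightarrow> idx3 cmat \<Rightarrow> bool)"
proof (rule generic_alignable_if_certificate, rule certificate_nonzero_if_solution)
  show "inverse3 ** system_mat roles3 R3 U3 H3 W3 = mat 1"
    by (simp add: vec_eq_iff all_idx3 matrix_matrix_mult_def sum_UNIV_pairs sum_idx3 mat_def
        inverse3_def system_mat_def U3_def H3_def W3_def R3_def axis_def int_mat_def)
  show "system_mat roles3 R3 U3 H3 W3 *v solution3 = axis (I1, I1) 1"
    by (simp add: vec_eq_iff all_idx3 matrix_vector_mult_def sum_UNIV_pairs sum_idx3
        solution3_def system_mat_def U3_def H3_def W3_def R3_def axis_def int_mat_def int_vec_def)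
  show "residual roles3 U3 H3 W3 solution3 i i \<noteq> 0" for i
    by (cases i) (simp_all add: residual_eq_sum_coeff sum_UNIV_pairs sum_idx3
        U3_def H3_def W3_def solution3_def int_mat_def int_vec_def)
qed

datatype idx4 = J0 | J1 | J2 | J3

lemma UNIV_idx4: "(UNIV :: idx4 set) = {J0, J1, J2, J3}"
  using idx4.exhaust by auto

instance idx4 :: finite
  by standard (simp add: UNIV_idx4)

lemma sum_idx4: "sum f (UNIV :: idx4 set) = f J0 + f J1 + f J2 + f J3"
  by (simp add: UNIV_idx4 ac_simps)

lemma all_idx4: "(\<forall>x :: idx4. P x) \<longleftrightarrow> P J0 \<and> P J1 \<and> P J2 \<and> P J3"
  by (metis idx4.exhaust)

fun ix4 :: "idx4 \<Rightarrow> nat" where "ix4 J0 = 0" | "ix4 J1 = 1" | "ix4 J2 = 2" | "ix4 J3 = 3"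

fun pair_ix4 :: "idx4 \<times> idx4 \<Rightarrow> nat" where "pair_ix4 (a, b) = 4 * ix4 a + ix4 b"

fun roles4 :: "idx4 \<Rightarrow> role" where
  "roles4 J0 = Diag1" | "roles4 J1 = Diag2" | "roles4 J2 = Diag3" | "roles4 J3 = Multiplier"

fun normalised4 :: "idx4 \<Rightarrow> idx4 \<times> idx4" where
  "normalised4 J0 = (J3, J3)" | "normalised4 J1 = (J2, J0)" | "normalised4 J2 = (J1, J0)"
| "normalised4 J3 = (J1, J2)"

definition "U4 = int_mat ix4 [[1, 0, 1, 0], [0, 0, 0, 1], [0, 0, 1, 0], [1, 0, 1, 1]]"
definition "H4 = int_mat ix4 [[1, 0, 1, 1], [1, 1, 1, 1], [1, 1, 1, 0], [0, 1, 1, 1]]"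
definition "W4 = int_mat ix4 [[0, 0, 1, 1], [0, 0, 1, 0], [1, 1, 1, 1], [1, 1, 1, 0]]"
definition "R4 i = axis (normalised4 i) 1"

definition "inverse4 = int_mat pair_ix4
  [[1, 0, 0, 0, 1, 0, -1, 0, 0, 0, 0, 0, -1, 0, 1, 0],
   [-3, 2, 1, -1, -1, 0, 0, 1, 1, -1, 3, -1, 1, -2, -1, 3],
   [1, -1, -1, 1, 0, 0, 1, -1, 0, 0, -1, 1, 0, 1, 0, -2],
   [-4, 4, 1, -2, -1, 0, -1, 2, 1, -1, 5, -2, 1, -4, 0, 5],
   [0, 0, 0, 0, 0, 0, 0, 0, 0, 0, 1, 0, 0, 0, 0, 0],
   [0, 0, 1, -1, 0, 0, -1, 1, 0, 0, 0, 0, 0, 0, 0, 0],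
   [0, 0, 0, 0, 0, 0, 0, 0, 0, 0, 0, 0, 0, 0, 0, 1],
   [-3, 3, 2, -2, -1, 0, -2, 2, 1, -1, 4, -2, 1, -3, 0, 4],
   [0, 0, 0, 0, 0, 1, 0, 0, 0, 0, 0, 0, 0, 0, 0, 0],
   [1, 0, 0, 0, 0, -1, 0, 0, 0, 0, 0, 0, -1, 0, 1, 0],
   [1, 0, 0, 0, 0, 0, 0, 0, 0, 0, -1, 0, 0, 1, 0, -1],
   [0, 1, 0, 0, 0, 0, 0, 0, 0, -1, 1, 0, 0, 0, 0, 1],
   [-1, 2, 0, 0, -1, 0, 0, 1, 1, -1, 2, -1, 0, -1, 0, 2],
   [-2, 1, 1, -1, 0, 0, -1, 1, 0, 0, 2, -1, 1, -2, 0, 2],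
   [-1, 1, 0, 0, 0, 0, 0, 0, 0, 0, 1, 0, 0, -1, 0, 1],
   [1, 0, 0, 0, 0, 0, 0, 0, 0, 0, 0, 0, 0, 0, 0, 0]]"

definition "solution4 = int_vec pair_ix4 [0, 3, -1, 5, 1, 0, 0, 4, 0, 0, -1, 1, 2, 2, 1, 0]"

lemma generic_alignable_idx4: "generic (alignable :: idx4 cmat \<Rightarrow> idx4 cmat \<Rightarrow> idx4 cmat \<Rightarrow> bool)"
proof (rule generic_alignable_if_certificate, rule certificate_nonzero_if_solution)
  show "inverse4 ** system_mat roles4 R4 U4 H4 W4 = mat 1"
    by (simp add: vec_eq_iff all_idx4 matrix_matrix_mult_def sum_UNIV_pairs sum_idx4 mat_def
        inverse4_def system_mat_def U4_def H4_def W4_def R4_def axis_def int_mat_def)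
  show "system_mat roles4 R4 U4 H4 W4 *v solution4 = axis (J2, J2) 1"
    by (simp add: vec_eq_iff all_idx4 matrix_vector_mult_def sum_UNIV_pairs sum_idx4
        solution4_def system_mat_def U4_def H4_def W4_def R4_def axis_def int_mat_def int_vec_def)
  show "residual roles4 U4 H4 W4 solution4 i i \<noteq> 0" for i
    by (cases i) (simp_all add: residual_eq_sum_coeff sum_UNIV_pairs sum_idx4
        U4_def H4_def W4_def solution4_def int_mat_def int_vec_def)
qed

lemma generic_alignable_card_eq:
  assumes "CARD('m::finite) = CARD('n::finite)"
    and "generic (alignable :: 'm cmat \<Rightarrow> 'm cmat \<Rightarrow> 'm cmat \<Rightarrow> bool)"
  shows "generic (alignable :: 'n cmat \<Rightarrow> 'n cmat \<Rightarrow> 'n cmat \<Rightarrow> bool)"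
proof -
  obtain g :: "'m \<Rightarrow> 'n" where g: "bij g"
    using assms(1) bij_betw_iff_card[of "UNIV :: 'm set" "UNIV :: 'n set"] by auto
  show ?thesis
    using g assms(2) alignable_relabel[OF g] by (rule generic_relabel)
qed

theorem theorem5:
  assumes "CARD('n::finite) = 3 \<or> CARD('n) = 4"
  shows "generic (\<lambda>(U::'n cmat) (H::'n cmat) (W::'n cmat).
           \<exists>D1 D2 D3 (lam :: 'n \<Rightarrow> complex).
             diagonal_mat D1 \<and> diagonal_mat D2 \<and> diagonal_mat D3 \<and>
             (let B = H ** D1 + H ** D2 ** U + W ** D3 ** H in
               \<forall>i. (\<forall>j. j \<noteq> i \<longrightarrow> B $ i $ j = lam i * H $ i $ j) \<and>
                   B $ i $ i \<noteq> lam i * H $ i $ i))"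
proof -
  have "CARD(idx3) = 3" "CARD(idx4) = 4"
    by (simp_all add: UNIV_idx3 UNIV_idx4)
  then have "generic (alignable :: 'n cmat \<Rightarrow> 'n cmat \<Rightarrow> 'n cmat \<Rightarrow> bool)"
    using assms generic_alignable_card_eq generic_alignable_idx3 generic_alignable_idx4 by metis
  then show ?thesis
    unfolding alignable_def [abs_def] .
qed

end
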